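(* For every $\lambda>0$ there exists $\delta_1=\delta_1(\lambda)>0$ such that for all $r>0$ and all $x,y\in\mathbb{R}^d$ with $r\leq\|x-y\|\leq\lambda r$, there is a point $z\in\operatorname{conv}(\{x,y\})$ such that $B(z,\delta_1 r)\subseteq W(x,y,r)$.
   Context: $B(x,r)=\{y\in\mathbb{R}^d:\|x-y\|<r\}$ is the open Euclidean ball. For $x,y\in\mathbb{R}^d$ and $r>0$, $W(x,y,r):=\{z\in B(y,\|y-x\|): B(z,r)\supseteq B(x,r)\cap B(y,\|y-x\|)\}$. $\operatorname{conv}$ denotes convex hull. *)

theory Defs
  imports "HOL-Analysis.Analysis"
begin

definition W :: "'a::euclidean_space \<Rightarrow> 'a \<Rightarrow> real \<Rightarrow> 'a set" where
  "W x y r = {z \<in> ball y (norm (y - x)). ball x r \<inter> ball y (norm (y - x)) \<subseteq> ball z r}"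

end

theory Submission
  imports Defs
begin

text \<open>Put \<open>d = y - x\<close> and take \<open>z = x + (c r / \<parallel>d\<parallel>) d\<close>, the point of the segment at distance \<open>c r\<close>
  from \<open>x\<close>, with \<open>c\<close> and \<open>\<delta>\<^sub>1\<close> small in terms of \<open>\<lambda>\<close>. Every \<open>w = z + e\<close> with \<open>\<parallel>e\<parallel> < \<delta>\<^sub>1 r\<close> lies
  in \<open>B(y, \<parallel>d\<parallel>)\<close>, since \<open>w\<close> is closer to \<open>y\<close> than \<open>x\<close> is. For \<open>p = x + q\<close> in the lens
  \<open>B(x, r) \<inter> B(y, \<parallel>d\<parallel>)\<close> we have \<open>\<parallel>q\<parallel>\<^sup>2 < 2 q\<bullet>d\<close>. If \<open>\<parallel>q\<parallel> \<le> r/2\<close>, the triangle inequality gives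
  \<open>\<parallel>p - w\<parallel> < r\<close>. Otherwise \<open>q\<bullet>d \<ge> r\<^sup>2/8\<close>, so \<open>q\<bullet>(w - x)\<close> is at least of order \<open>c r\<^sup>2/\<lambda>\<close> while
  \<open>\<parallel>w - x\<parallel>\<^sup>2\<close> is of order \<open>c\<^sup>2 r\<^sup>2\<close>; hence \<open>\<parallel>w - x\<parallel>\<^sup>2 \<le> 2 q\<bullet>(w - x)\<close>, i.e. \<open>p\<close> is at least as close
  to \<open>w\<close> as to \<open>x\<close>.\<close>

lemma norm_diff_le_norm_iff:
  fixes u v :: "'a::real_inner"
  shows "norm (u - v) \<le> norm u \<longleftrightarrow> (norm v)\<^sup>2 \<le> 2 * (u \<bullet> v)"
proof -
  have "norm (u - v) \<le> norm u \<longleftrightarrow> (norm (u - v))\<^sup>2 \<le> (norm u)\<^sup>2"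
    by simp
  then show ?thesis
    by (simp add: dot_norm_neg[of u v])
qed

lemma norm_diff_less_norm_iff:
  fixes u v :: "'a::real_inner"
  shows "norm (u - v) < norm u \<longleftrightarrow> (norm v)\<^sup>2 < 2 * (u \<bullet> v)"
proof -
  have "norm (u - v) < norm u \<longleftrightarrow> (norm (u - v))\<^sup>2 < (norm u)\<^sup>2"
    by (metis norm_ge_zero pos2 power2_less_imp_less power_strict_mono)
  then show ?thesis
    by (simp add: dot_norm_neg[of u v])
qed

lemma norm_shift_less:
  fixes d e :: "'a::real_normed_vector"
  assumes "d \<noteq> 0" "0 \<le> c * r" "norm e < c * r"
  shows "norm ((c * r / norm d) *\<^sub>R d + e) < 2 * c * r"
proof -
  have "norm ((c * r / norm d) *\<^sub>R d + e) \<le> norm ((c * r / norm d) *\<^sub>R d) + norm e"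
    by (rule norm_triangle_ineq)
  also have "norm ((c * r / norm d) *\<^sub>R d) = c * r"
    using assms(1,2) by simp
  finally show ?thesis
    using assms(3) by simp
qed

lemma inner_shift_lower_bound:
  fixes q d e :: "'a::real_inner"
  assumes lam: "0 < lam" and r: "0 < r" and d: "d \<noteq> 0" "norm d \<le> lam * r"
    and c: "0 \<le> c" and \<delta>: "16 * lam * \<delta> \<le> c"
    and q: "r \<le> 2 * norm q" "norm q < r" "norm (q - d) < norm d" and e: "norm e < \<delta> * r"
  shows "c * r\<^sup>2 \<le> 16 * lam * (q \<bullet> ((c * r / norm d) *\<^sub>R d + e))"
proof -
  define a where "a = c * r / norm d"
  have "(norm q)\<^sup>2 < 2 * (q \<bullet> d)"
    using q(3) norm_diff_less_norm_iff[of d q] by (simp add: norm_minus_commute inner_commute)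
  moreover have "r\<^sup>2 \<le> 4 * (norm q)\<^sup>2"
    using q(1) r by (smt (verit) power_mono power_mult_distrib four_x_squared)
  ultimately have qd: "r\<^sup>2 \<le> 8 * (q \<bullet> d)"
    by linarith
  have a: "0 \<le> a"
    using c r by (simp add: a_def)
  have "c * r = a * norm d"
    using d by (simp add: a_def)
  also have "\<dots> \<le> a * (lam * r)"
    using d(2) a by (rule mult_left_mono)
  also have "\<dots> = (lam * a) * r"
    by simp
  finally have "c \<le> lam * a"
    using r by simp
  then have "c * r\<^sup>2 \<le> (lam * a) * r\<^sup>2"
    by (simp add: mult_right_mono)
  also have "\<dots> \<le> (lam * a) * (8 * (q \<bullet> d))"
    using qd lam a by (simp add: mult_left_mono)
  finally have qd': "c * r\<^sup>2 \<le> 8 * lam * a * (q \<bullet> d)"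
    by (simp add: algebra_simps)
  have "\<bar>q \<bullet> e\<bar> \<le> norm q * norm e"
    by (rule Cauchy_Schwarz_ineq2)
  also have "\<dots> \<le> r * (\<delta> * r)"
    using q(2) e r by (intro mult_mono) auto
  finally have "- (\<delta> * r\<^sup>2) \<le> q \<bullet> e"
    by (simp add: power2_eq_square algebra_simps abs_le_iff)
  then have "16 * lam * (- (\<delta> * r\<^sup>2)) \<le> 16 * lam * (q \<bullet> e)"
    using lam by (intro mult_left_mono) auto
  moreover have "16 * lam * \<delta> * r\<^sup>2 \<le> c * r\<^sup>2"
    using \<delta> by (simp add: mult_right_mono)
  moreover have "16 * lam * (q \<bullet> (a *\<^sub>R d + e)) = 2 * (8 * lam * a * (q \<bullet> d)) + 16 * lam * (q \<bullet> e)"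
    by (simp add: algebra_simps)
  ultimately have "c * r\<^sup>2 \<le> 16 * lam * (q \<bullet> (a *\<^sub>R d + e))"
    using qd' by (simp add: algebra_simps)
  then show ?thesis
    by (simp add: a_def)
qed

lemma lens_subset_ball_after_shift:
  fixes q d e :: "'a::real_inner"
  assumes lam: "0 < lam" and r: "0 < r" and d: "d \<noteq> 0" "norm d \<le> lam * r"
    and c: "4 * c \<le> 1" "32 * lam * c \<le> 1"
    and \<delta>: "0 \<le> \<delta>" "\<delta> \<le> c" "16 * lam * \<delta> \<le> c"
    and q: "norm q < r" "norm (q - d) < norm d" and e: "norm e < \<delta> * r"
  shows "norm (q - ((c * r / norm d) *\<^sub>R d + e)) < r"
proof -
  define v where "v = (c * r / norm d) *\<^sub>R d + e"
  have "norm e < c * r"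
    using e \<delta> r mult_right_mono[of \<delta> c r] by linarith
  then have v: "norm v < 2 * c * r"
    unfolding v_def using d \<delta> r by (intro norm_shift_less) auto
  show ?thesis
  proof (cases "2 * norm q \<le> r")
    case True
    have "norm (q - v) \<le> norm q + norm v"
      by (rule norm_triangle_ineq4)
    also have "\<dots> < r"
      using True v c r mult_right_mono[of "4 * c" 1 r] by linarith
    finally show ?thesis
      by (simp add: v_def)
  next
    case False
    have "8 * lam * (norm v)\<^sup>2 \<le> 8 * lam * (2 * c * r)\<^sup>2"
      using v lam by (simp add: power_mono)
    also have "\<dots> = (32 * lam * c) * (c * r\<^sup>2)"
      by (simp add: power2_eq_square)
    also have "\<dots> \<le> c * r\<^sup>2"
      using c \<delta> lam by (intro mult_left_le_one_le) auto
    also have "\<dots> \<le> 8 * lam * (2 * (q \<bullet> v))"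
      using inner_shift_lower_bound[OF lam r d _ \<delta>(3) _ q e] False \<delta> by (simp add: v_def)
    finally have "(norm v)\<^sup>2 \<le> 2 * (q \<bullet> v)"
      using lam by simp
    then have "norm (q - v) \<le> norm q"
      by (simp add: norm_diff_le_norm_iff)
    with q(1) show ?thesis
      by (simp add: v_def)
  qed
qed

lemma segment_point_with_ball_in_W:
  fixes x y :: "'a::euclidean_space"
  assumes lam: "0 < lam" and r: "0 < r" "r \<le> norm (y - x)" "norm (y - x) \<le> lam * r"
    and c: "4 * c \<le> 1" "32 * lam * c \<le> 1"
    and \<delta>: "0 \<le> \<delta>" "\<delta> \<le> c" "16 * lam * \<delta> \<le> c"
  shows "\<exists>z\<in>convex hull {x, y}. ball z (\<delta> * r) \<subseteq> W x y r"
proof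
  define d where "d = y - x"
  define a where "a = c * r / norm d"
  have d: "d \<noteq> 0" "norm d \<le> lam * r"
    using r by (auto simp: d_def)
  have "c * r \<le> norm d"
    using r c \<delta> mult_mono[of c 1 r "norm d"] by (simp add: d_def)
  then have a: "0 \<le> a" "a \<le> 1"
    using r \<delta> d by (auto simp: a_def)
  then show "x + a *\<^sub>R d \<in> convex hull {x, y}"
    by (auto simp: segment_convex_hull[symmetric] in_segment d_def algebra_simps intro!: exI[of _ a])
  show "ball (x + a *\<^sub>R d) (\<delta> * r) \<subseteq> W x y r"
  proof
    fix w
    assume w: "w \<in> ball (x + a *\<^sub>R d) (\<delta> * r)"
    define e where "e = w - (x + a *\<^sub>R d)"
    have e: "norm e < \<delta> * r"
      using w by (simp add: e_def dist_norm norm_minus_commute)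
    have "norm (y - w) = norm ((1 - a) *\<^sub>R d - e)"
      by (simp add: e_def d_def algebra_simps)
    also have "\<dots> \<le> (1 - a) * norm d + norm e"
      using norm_triangle_ineq4[of "(1 - a) *\<^sub>R d" e] a by simp
    also have "\<dots> < norm d - c * r + \<delta> * r"
      using e d by (simp add: a_def algebra_simps)
    also have "\<dots> \<le> norm d"
      using \<delta> r mult_right_mono[of \<delta> c r] by linarith
    finally have "w \<in> ball y (norm d)"
      by (simp add: dist_norm)
    moreover have "ball x r \<inter> ball y (norm d) \<subseteq> ball w r"
    proof
      fix p
      assume p: "p \<in> ball x r \<inter> ball y (norm d)"
      have "norm ((p - x) - (a *\<^sub>R d + e)) < r"
        unfolding a_def
        by (rule lens_subset_ball_after_shift[OF lam r(1) d c \<delta> _ _ e])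
          (use p in \<open>auto simp: d_def dist_norm norm_minus_commute\<close>)
      then show "p \<in> ball w r"
        by (simp add: e_def dist_norm norm_minus_commute algebra_simps)
    qed
    ultimately show "w \<in> W x y r"
      by (simp add: W_def d_def)
  qed
qed

theorem lemma3p2:
  fixes lam :: real
  assumes "lam > 0"
  shows "\<exists>\<delta>1>0. \<forall>r>0. \<forall>x y :: 'a::euclidean_space.
           r \<le> norm (x - y) \<and> norm (x - y) \<le> lam * r \<longrightarrow>
           (\<exists>z\<in>convex hull {x, y}. ball z (\<delta>1 * r) \<subseteq> W x y r)"
proof -
  define c where "c = 1 / (32 * (1 + lam))"
  define \<delta> where "\<delta> = c / (16 * (1 + lam))"
  have "0 < c" "32 * c * (1 + lam) = 1" "0 < \<delta>" "16 * \<delta> * (1 + lam) = c"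
    using assms by (auto simp: c_def \<delta>_def)
  moreover have "0 \<le> c * lam" "0 \<le> \<delta> * lam"
    using calculation assms by simp_all
  ultimately have c: "4 * c \<le> 1" "32 * lam * c \<le> 1"
    and \<delta>: "0 < \<delta>" "\<delta> \<le> c" "16 * lam * \<delta> \<le> c"
    by (simp_all add: algebra_simps)
  have "\<exists>z\<in>convex hull {x, y}. ball z (\<delta> * r) \<subseteq> W x y r"
    if "0 < r" "r \<le> norm (x - y)" "norm (x - y) \<le> lam * r" for r and x y :: 'a
    using that \<delta>(1) norm_minus_commute[of x y]
    by (intro segment_point_with_ball_in_W[OF assms _ _ _ c _ \<delta>(2,3)]) simp_all
  with \<delta>(1) show ?thesis
    by blast
qed

end
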